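(* Let $\mathcal{H}$ and $\mathcal{H}'$ be two hypertrees with the same vertex set. Then they are equivalent if and only if $\mathcal{H}'$ can be obtained from $\mathcal{H}$ by a finite sequence of the following operations: removing/adding an edge with exactly one vertex; removing/adding an edge equal to the whole vertex set; adding an edge with the same vertices as an existing edge; removing an edge for which another edge with the same vertices exists; adding an edge that is the nonempty intersection of some edges; adding an edge that is the union of two non-disjoint edges; adding an edge that is the connected union of some edges; removing an edge that is the intersection of other edges; removing an edge that is the connected union of other edges.
   Context: A hypergraph has a finite vertex set and a finite family (repetitions allowed) of nonempty subsets of it (edges). A host tree is a tree on the vertex set in which every edge induces a connected subgraph; a hypertree is a hypergraph with a host tree. Hypergraphs on the same vertex set are equivalent if they have the same host trees. A union of sets is connected if the intersection graph of the sets is connected. *)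

theory Defs
  imports Main "HOL-Library.Multiset"
begin

definition graph_on :: "'a set \<Rightarrow> 'a set set \<Rightarrow> bool" where
  "graph_on V T \<longleftrightarrow> (\<forall>t\<in>T. \<exists>u v. u \<in> V \<and> v \<in> V \<and> u \<noteq> v \<and> t = {u, v})"

definition induced_connected :: "'a set set \<Rightarrow> 'a set \<Rightarrow> bool" where
  "induced_connected T S \<longleftrightarrow>
     (\<forall>u\<in>S. \<forall>v\<in>S. (\<lambda>x y. x \<in> S \<and> y \<in> S \<and> {x, y} \<in> T)\<^sup>*\<^sup>* u v)"

definition has_cycle :: "'a set set \<Rightarrow> bool" where
  "has_cycle T \<longleftrightarrow> (\<exists>vs. distinct vs \<and> length vs \<ge> 3 \<and>
      (\<forall>i < length vs. {vs ! i, vs ! (Suc i mod length vs)} \<in> T))"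

definition is_tree :: "'a set \<Rightarrow> 'a set set \<Rightarrow> bool" where
  "is_tree V T \<longleftrightarrow> V \<noteq> {} \<and> graph_on V T \<and> induced_connected T V \<and> \<not> has_cycle T"

definition hypergraph :: "'a set \<Rightarrow> 'a set multiset \<Rightarrow> bool" where
  "hypergraph V E \<longleftrightarrow> finite V \<and> (\<forall>e\<in>#E. e \<noteq> {} \<and> e \<subseteq> V)"

definition host_tree :: "'a set \<Rightarrow> 'a set multiset \<Rightarrow> 'a set set \<Rightarrow> bool" where
  "host_tree V E T \<longleftrightarrow> is_tree V T \<and> (\<forall>e\<in>#E. induced_connected T e)"

definition hypertree :: "'a set \<Rightarrow> 'a set multiset \<Rightarrow> bool" where
  "hypertree V E \<longleftrightarrow> hypergraph V E \<and> (\<exists>T. host_tree V E T)"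

definition equivalent :: "'a set \<Rightarrow> 'a set multiset \<Rightarrow> 'a set multiset \<Rightarrow> bool" where
  "equivalent V E E' \<longleftrightarrow> (\<forall>T. host_tree V E T \<longleftrightarrow> host_tree V E' T)"

definition connected_union :: "'a set multiset \<Rightarrow> bool" where
  "connected_union F \<longleftrightarrow>
     (\<forall>A\<in>#F. \<forall>B\<in>#F. (\<lambda>X Y. X \<in># F \<and> Y \<in># F \<and> X \<inter> Y \<noteq> {})\<^sup>*\<^sup>* A B)"

definition hyper_op :: "'a set \<Rightarrow> 'a set multiset \<Rightarrow> 'a set multiset \<Rightarrow> bool" where
  "hyper_op V E E' \<longleftrightarrow>
     \<comment> \<open>add / remove an edge with exactly one vertex\<close>
     (\<exists>e. e \<subseteq> V \<and> card e = 1 \<and> E' = add_mset e E) \<or>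
     (\<exists>e. e \<in># E \<and> card e = 1 \<and> E' = E - {#e#}) \<or>
     \<comment> \<open>add / remove an edge equal to the whole vertex set\<close>
     (V \<noteq> {} \<and> E' = add_mset V E) \<or>
     (V \<in># E \<and> E' = E - {#V#}) \<or>
     \<comment> \<open>add a copy of an existing edge\<close>
     (\<exists>e. e \<in># E \<and> E' = add_mset e E) \<or>
     \<comment> \<open>remove an edge of which another copy exists\<close>
     (\<exists>e. count E e \<ge> 2 \<and> E' = E - {#e#}) \<or>
     \<comment> \<open>add a nonempty intersection of some edges\<close>
     (\<exists>F. F \<subseteq># E \<and> F \<noteq> {#} \<and> \<Inter>(set_mset F) \<noteq> {} \<and> E' = add_mset (\<Inter>(set_mset F)) E) \<or>
     \<comment> \<open>add the union of two non-disjoint edges\<close>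
     (\<exists>e1 e2. {#e1, e2#} \<subseteq># E \<and> e1 \<inter> e2 \<noteq> {} \<and> E' = add_mset (e1 \<union> e2) E) \<or>
     \<comment> \<open>add a connected union of some edges\<close>
     (\<exists>F. F \<subseteq># E \<and> F \<noteq> {#} \<and> connected_union F \<and> E' = add_mset (\<Union>(set_mset F)) E) \<or>
     \<comment> \<open>remove an edge that is the intersection of other edges\<close>
     (\<exists>e F. e \<in># E \<and> F \<subseteq># E - {#e#} \<and> F \<noteq> {#} \<and> e = \<Inter>(set_mset F) \<and> E' = E - {#e#}) \<or>
     \<comment> \<open>remove an edge that is the connected union of other edges\<close>
     (\<exists>e F. e \<in># E \<and> F \<subseteq># E - {#e#} \<and> F \<noteq> {#} \<and> connected_union F \<and>
            e = \<Union>(set_mset F) \<and> E' = E - {#e#})"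

end

theory Submission
  imports Defs "HOL-Library.Transitive_Closure_Table"
begin

(* Each operation adds or removes a set that is connected in every host tree of the other
   edges: singletons and V trivially, copies of edges, nonempty intersections of subtrees (paths
   in a tree are unique) and connected unions of subtrees. So operations preserve host trees, and
   they come in inverse pairs.
   Conversely, every nonempty S connected in all host trees of E is derivable from E, singletons
   and V by nonempty intersections and overlapping unions. Otherwise take a host tree T with the
   fewest edges inside S: some edge {u, v} of T inside S lies in no derivable subset of S, so the
   least derivable set B containing u and v has a vertex w outside S, and replacing {u, v} by
   {w, v} or {w, u} yields a host tree with fewer edges inside S. Hence every hypertree can be
   transformed into the duplicate-free multiset of these common subtrees, which only depends on
   the host trees. *)

section \<open>Paths and forests\<close>

definition adjacent :: "'a set set \<Rightarrow> 'a \<Rightarrow> 'a \<Rightarrow> bool" where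
  "adjacent G x y \<longleftrightarrow> {x, y} \<in> G"

abbreviation reach :: "'a set set \<Rightarrow> 'a \<Rightarrow> 'a \<Rightarrow> bool" where
  "reach G \<equiv> (adjacent G)\<^sup>*\<^sup>*"

definition edges_within :: "'a set set \<Rightarrow> 'a set \<Rightarrow> 'a set set" where
  "edges_within T S = {e \<in> T. e \<subseteq> S}"

lemma induced_connected_iff:
  "induced_connected T S \<longleftrightarrow> (\<forall>u\<in>S. \<forall>v\<in>S. reach (edges_within T S) u v)"
proof -
  have "(\<lambda>x y. x \<in> S \<and> y \<in> S \<and> {x, y} \<in> T) = adjacent (edges_within T S)"
    by (auto simp: adjacent_def edges_within_def fun_eq_iff)
  then show ?thesis
    by (simp add: induced_connected_def)
qed

lemma reach_sym: "reach G x y \<Longrightarrow> reach G y x"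
proof -
  have "symp (adjacent G)"
    by (auto intro: sympI simp: adjacent_def insert_commute)
  then show "reach G x y \<Longrightarrow> reach G y x"
    by (rule sympD[OF symp_rtranclp])
qed

lemma reach_mono: "G \<subseteq> H \<Longrightarrow> reach G x y \<Longrightarrow> reach H x y"
proof -
  assume "G \<subseteq> H" "reach G x y"
  then have "adjacent G \<le> adjacent H"
    by (auto simp: adjacent_def)
  with \<open>reach G x y\<close> show ?thesis
    using rtranclp_mono by blast
qed

lemma reach_edge: "{x, y} \<in> G \<Longrightarrow> reach G x y"
  by (simp add: adjacent_def r_into_rtranclp)

lemma reach_insert_edge:
  assumes "reach (insert {p, q} G) x y"
  shows "reach G x y \<or> (reach G x p \<and> reach G q y) \<or> (reach G x q \<and> reach G p y)"
  using assms
proof (induction rule: rtranclp_induct)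
  case (step y z)
  then have "adjacent G y z \<or> (y = p \<and> z = q) \<or> (y = q \<and> z = p)"
    by (auto simp: adjacent_def doubleton_eq_iff)
  with step.IH show ?case
    by (elim disjE conjE) (auto intro: rtranclp.rtrancl_into_rtrancl dest: reach_sym)
qed simp

lemma reach_remove_edge:
  assumes "reach G y u"
  shows "reach (G - {{u, v}}) y u \<or> reach (G - {{u, v}}) y v"
  using assms
proof (induction rule: converse_rtranclp_induct)
  case (step y z)
  show ?case
  proof (cases "{y, z} = {u, v}")
    case True
    then show ?thesis by (auto simp: doubleton_eq_iff)
  next
    case False
    with step.hyps(1) have "adjacent (G - {{u, v}}) y z"
      by (simp add: adjacent_def)
    with step.IH show ?thesis
      by (meson converse_rtranclp_into_rtranclp)
  qed
qed simp

lemma reach_finite_subgraph: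
  assumes "reach G a b"
  shows "\<exists>H\<subseteq>G. finite H \<and> reach H a b"
  using assms
proof (induction rule: rtranclp_induct)
  case (step y z)
  then obtain H where "H \<subseteq> G" "finite H" "reach H a y"
    by blast
  have "reach (insert {y, z} H) a y"
    using \<open>reach H a y\<close> by (rule reach_mono[rotated]) blast
  moreover have "reach (insert {y, z} H) y z"
    by (simp add: reach_edge)
  ultimately have "reach (insert {y, z} H) a z"
    by (rule rtranclp_trans)
  moreover have "insert {y, z} H \<subseteq> G"
    using \<open>H \<subseteq> G\<close> step.hyps(2) by (simp add: adjacent_def)
  ultimately show ?case
    using \<open>finite H\<close> by blast
qed blast

definition forest :: "'a set set \<Rightarrow> bool" where
  "forest T \<longleftrightarrow> (\<forall>u v. {u, v} \<in> T \<longrightarrow> \<not> reach (T - {{u, v}}) u v)"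

lemma forest_mono: "forest T \<Longrightarrow> H \<subseteq> T \<Longrightarrow> forest H"
  unfolding forest_def by (blast intro: reach_mono[rotated])

lemma forest_insert_edge:
  assumes "forest G" and "\<not> reach G x y"
  shows "forest (insert {x, y} G)"
  unfolding forest_def
proof (intro allI impI notI)
  fix a b
  assume ab: "{a, b} \<in> insert {x, y} G"
    and r: "reach (insert {x, y} G - {{a, b}}) a b"
  show False
  proof (cases "{a, b} = {x, y}")
    case True
    then have "reach G a b"
      using r by (auto intro: reach_mono[rotated])
    with True assms(2) show False
      by (auto simp: doubleton_eq_iff dest: reach_sym)
  next
    case False
    define H where "H = G - {{a, b}}"
    have abG: "{a, b} \<in> G"
      using ab False by simp
    have HG: "reach H c d \<Longrightarrow> reach G c d" for c d
      by (rule reach_mono[of H]) (auto simp: H_def)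
    have "reach (insert {x, y} H) a b"
      using r False by (simp add: H_def insert_Diff_if)
    moreover have "\<not> reach H a b"
      using assms(1) abG by (simp add: forest_def H_def)
    ultimately consider "reach H a x" "reach H y b" | "reach H a y" "reach H x b"
      using reach_insert_edge[of x y H a b] by blast
    then have "reach G x y"
    proof cases
      case 1
      have "reach G x a" by (rule HG[OF reach_sym[OF 1(1)]])
      also have "reach G a b" by (rule reach_edge[OF abG])
      also have "reach G b y" by (rule HG[OF reach_sym[OF 1(2)]])
      finally show ?thesis .
    next
      case 2
      have "reach G x b" by (rule HG[OF 2(2)])
      also have "reach G b a" by (rule reach_sym[OF reach_edge[OF abG]])
      also have "reach G a y" by (rule HG[OF 2(1)])
      finally show ?thesis .
    qed
    with assms(2) show False ..
  qed
qed

lemma forest_reach_remove: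
  assumes "forest T" "H \<subseteq> T" "reach H a b" "reach (T - {e}) a b"
  shows "reach (H - {e}) a b"
proof (cases "e \<in> H \<and> (\<exists>p q. e = {p, q})")
  case False
  then have "adjacent (H - {e}) = adjacent H"
    by (auto simp: adjacent_def fun_eq_iff)
  with assms(3) show ?thesis
    by simp
next
  case True
  then obtain p q where e: "e = {p, q}" "e \<in> H"
    by blast
  have HT: "reach (H - {e}) c d \<Longrightarrow> reach (T - {e}) c d" for c d
    using assms(2) by (auto intro: reach_mono[rotated])
  have no_pq: "\<not> reach (T - {e}) p q"
    using assms(1,2) e by (auto simp: forest_def)
  have "reach (insert {p, q} (H - {e})) a b"
    using e assms(3) by (simp add: insert_absorb)
  then consider "reach (H - {e}) a b"
    | "reach (H - {e}) a p" "reach (H - {e}) q b"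
    | "reach (H - {e}) a q" "reach (H - {e}) p b"
    using reach_insert_edge[of p q "H - {e}" a b] by blast
  then show ?thesis
  proof cases
    case 1
    then show ?thesis .
  next
    case 2
    have "reach (T - {e}) p a" by (rule reach_sym[OF HT[OF 2(1)]])
    also have "reach (T - {e}) a b" by (rule assms(4))
    also have "reach (T - {e}) b q" by (rule reach_sym[OF HT[OF 2(2)]])
    finally show ?thesis using no_pq by contradiction
  next
    case 3
    have "reach (T - {e}) p b" by (rule HT[OF 3(2)])
    also have "reach (T - {e}) b a" by (rule reach_sym[OF assms(4)])
    also have "reach (T - {e}) a q" by (rule HT[OF 3(1)])
    finally show ?thesis using no_pq by contradiction
  qed
qed

(* Paths in a forest are unique, so the edges of H outside H' can be dropped one at a time. *)
lemma forest_reach_Int: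
  assumes "forest T" "H \<subseteq> T" "H' \<subseteq> T" "reach H a b" "reach H' a b"
  shows "reach (H \<inter> H') a b"
proof -
  obtain H0 where H0: "H0 \<subseteq> H" "finite H0" "reach H0 a b"
    using reach_finite_subgraph[OF assms(4)] by blast
  from H0(2,1,3) have "reach (H0 \<inter> H') a b"
  proof (induction "card (H0 - H')" arbitrary: H0 rule: less_induct)
    case less
    show ?case
    proof (cases "H0 \<subseteq> H'")
      case True
      with less.prems(3) show ?thesis
        by (simp add: Int_absorb2)
    next
      case False
      then obtain e where e: "e \<in> H0" "e \<notin> H'"
        by blast
      have "reach (T - {e}) a b"
        using assms(3,5) e(2) by (auto intro: reach_mono[rotated])
      then have "reach (H0 - {e}) a b"
        using forest_reach_remove[OF assms(1), of H0] assms(2) less.prems(2,3) by blast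
      moreover have "card (H0 - {e} - H') < card (H0 - H')"
        using e less.prems(1) by (intro psubset_card_mono) auto
      ultimately have "reach ((H0 - {e}) \<inter> H') a b"
        using less.hyps[of "H0 - {e}"] less.prems(1,2) by blast
      moreover have "(H0 - {e}) \<inter> H' = H0 \<inter> H'"
        using e(2) by blast
      ultimately show ?thesis
        by simp
    qed
  qed
  then show ?thesis
    using H0(1) by (auto intro: reach_mono[rotated])
qed

section \<open>Subtrees of a forest\<close>

lemma induced_connected_Int:
  assumes "forest T" "induced_connected T X" "induced_connected T Y"
  shows "induced_connected T (X \<inter> Y)"
  unfolding induced_connected_iff
proof (intro ballI)
  fix a b
  assume "a \<in> X \<inter> Y" "b \<in> X \<inter> Y"
  then have "reach (edges_within T X) a b" "reach (edges_within T Y) a b"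
    using assms(2,3) by (auto simp: induced_connected_iff)
  moreover have "edges_within T X \<inter> edges_within T Y = edges_within T (X \<inter> Y)"
    "edges_within T X \<subseteq> T" "edges_within T Y \<subseteq> T"
    by (auto simp: edges_within_def)
  ultimately show "reach (edges_within T (X \<inter> Y)) a b"
    using forest_reach_Int[OF assms(1)] by metis
qed

lemma induced_connected_Inter:
  assumes "forest T" "finite FF" "FF \<noteq> {}" "\<forall>X\<in>FF. induced_connected T X"
  shows "induced_connected T (\<Inter>FF)"
  using assms(2-4)
  by (induction FF rule: finite_ne_induct) (simp_all add: induced_connected_Int[OF assms(1)])

lemma induced_connected_connected_union:
  assumes "connected_union F" "\<forall>X\<in>#F. induced_connected T X"
  shows "induced_connected T (\<Union>(set_mset F))"
  unfolding induced_connected_iff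
proof (intro ballI)
  define G where "G = edges_within T (\<Union>(set_mset F))"
  have into_G: "reach G x y" if "X \<in># F" "x \<in> X" "y \<in> X" for X x y
  proof -
    have "reach (edges_within T X) x y"
      using assms(2) that by (simp add: induced_connected_iff)
    moreover have "edges_within T X \<subseteq> G"
      using that(1) by (auto simp: G_def edges_within_def)
    ultimately show ?thesis
      by (rule reach_mono[rotated])
  qed
  fix a b
  assume "a \<in> \<Union>(set_mset F)" "b \<in> \<Union>(set_mset F)"
  then obtain A B where AB: "A \<in># F" "a \<in> A" "B \<in># F" "b \<in> B"
    by auto
  have "(\<lambda>X Y. X \<in># F \<and> Y \<in># F \<and> X \<inter> Y \<noteq> {})\<^sup>*\<^sup>* A B"
    using assms(1) AB by (simp add: connected_union_def)
  then have "\<forall>y\<in>B. reach G a y"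
  proof (induction rule: rtranclp_induct)
    case base
    then show ?case
      using into_G AB(1,2) by blast
  next
    case (step C D)
    then obtain z where "z \<in> C" "z \<in> D"
      by blast
    with step into_G show ?case
      by (meson rtranclp_trans)
  qed
  with AB(4) show "reach G a b"
    by blast
qed

lemma connected_union_pair: "X \<inter> Y \<noteq> {} \<Longrightarrow> connected_union {#X, Y#}"
  unfolding connected_union_def
  by (auto simp: Int_commute)

lemma induced_connected_singleton: "induced_connected T {x}"
  by (simp add: induced_connected_iff)

section \<open>Trees and edge exchange\<close>

lemma rtranclp_chain:
  assumes "\<And>i. l \<le> i \<Longrightarrow> i < k \<Longrightarrow> r (f i) (f (Suc i))" and "l \<le> k"
  shows "r\<^sup>*\<^sup>* (f l) (f k)"
  using assms by (induction k) (auto simp: le_Suc_eq intro: rtranclp.rtrancl_into_rtrancl)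

lemma is_tree_forest:
  assumes "is_tree V T"
  shows "forest T"
  unfolding forest_def
proof (intro allI impI notI)
  fix u v
  assume uv: "{u, v} \<in> T" and "reach (T - {{u, v}}) u v"
  then obtain xs where path: "rtrancl_path (adjacent (T - {{u, v}})) u xs v"
    and dist: "distinct (u # xs)"
    by (metis rtranclp_eq_rtrancl_path rtrancl_path_distinct)
  have "u \<noteq> v"
    using assms uv by (auto simp: is_tree_def graph_on_def doubleton_eq_iff)
  with path have "xs \<noteq> []"
    by (auto elim: rtrancl_path.cases)
  with path have last: "last xs = v"
    by (rule rtrancl_path_last)
  have step: "{(u # xs) ! i, xs ! i} \<in> T - {{u, v}}" if "i < length xs" for i
    using rtrancl_path_nth[OF path that] by (simp add: adjacent_def)
  have "xs \<noteq> [v]"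
    using step[of 0] by auto
  with \<open>xs \<noteq> []\<close> last have "2 \<le> length xs"
    by (cases xs) (auto split: if_splits simp: Suc_le_eq)
  have "has_cycle T"
    unfolding has_cycle_def
  proof (intro exI conjI allI impI)
    show "distinct (u # xs)" "3 \<le> length (u # xs)"
      using dist \<open>2 \<le> length xs\<close> by auto
    fix i
    assume i: "i < length (u # xs)"
    show "{(u # xs) ! i, (u # xs) ! (Suc i mod length (u # xs))} \<in> T"
    proof (cases "i < length xs")
      case True
      then show ?thesis
        using step[of i] by simp
    next
      case False
      with i have "i = length xs"
        by simp
      with \<open>xs \<noteq> []\<close> last uv show ?thesis
        by (simp add: last_conv_nth insert_commute)
    qed
  qed
  with assms show False
    by (simp add: is_tree_def)
qed

lemma forest_no_cycle:
  assumes "forest T"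
  shows "\<not> has_cycle T"
proof
  assume "has_cycle T"
  then obtain vs where dist: "distinct vs" and len: "3 \<le> length vs"
    and cyc: "\<And>i. i < length vs \<Longrightarrow> {vs ! i, vs ! (Suc i mod length vs)} \<in> T"
    unfolding has_cycle_def by blast
  define n where "n = length vs"
  define e where "e = {vs ! 0, vs ! 1}"
  have "e \<in> T"
    using cyc[of 0] len by (force simp: e_def)
  have not_first: "vs ! i \<noteq> vs ! 0" if "0 < i" "i < n" for i
    using that nth_eq_iff_index_eq[OF dist, of i 0] by (force simp: n_def)
  have "reach (T - {e}) (vs ! 1) (vs ! (n - 1))"
  proof (rule rtranclp_chain)
    fix i
    assume i: "1 \<le> i" "i < n - 1"
    then have "{vs ! i, vs ! Suc i} \<in> T"
      using cyc[of i] by (simp add: n_def)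
    moreover have "vs ! i \<noteq> vs ! 0" "vs ! Suc i \<noteq> vs ! 0"
      using i by (simp_all add: not_first)
    ultimately show "adjacent (T - {e}) (vs ! i) (vs ! Suc i)"
      by (auto simp: adjacent_def e_def doubleton_eq_iff)
  qed (use len in \<open>simp add: n_def\<close>)
  also have "{vs ! (n - 1), vs ! 0} \<in> T - {e}"
  proof -
    have "vs ! (n - 1) \<noteq> vs ! 0"
      using len by (simp add: not_first n_def)
    moreover have "vs ! (n - 1) \<noteq> vs ! 1"
      using nth_eq_iff_index_eq[OF dist, of "n - 1" 1] len by (simp add: n_def)
    ultimately have "vs ! (n - 1) \<notin> e"
      by (simp add: e_def)
    moreover have "Suc (n - 1) = n"
      using len by (simp add: n_def)
    ultimately show ?thesis
      using cyc[of "n - 1"] len by (auto simp: n_def e_def)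
  qed
  then have "reach (T - {e}) (vs ! (n - 1)) (vs ! 0)"
    by (rule reach_edge)
  finally have "reach (T - {e}) (vs ! 0) (vs ! 1)"
    by (rule reach_sym)
  with assms \<open>e \<in> T\<close> show False
    by (simp add: forest_def e_def)
qed

lemma induced_connected_exchange:
  assumes "induced_connected T X" "{u, v} \<in> T"
    and "u \<in> X \<Longrightarrow> v \<in> X \<Longrightarrow> w \<in> X \<and> reach (edges_within (T - {{u, v}}) X) w u"
  shows "induced_connected (insert {w, v} (T - {{u, v}})) X"
proof (cases "u \<in> X \<and> v \<in> X")
  case False
  then have "edges_within T X \<subseteq> edges_within (insert {w, v} (T - {{u, v}})) X"
    by (auto simp: edges_within_def)
  with assms(1) show ?thesis
    by (simp add: induced_connected_iff reach_mono)
next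
  case True
  define G where "G = edges_within (insert {w, v} (T - {{u, v}})) X"
  have sub: "edges_within T X - {{u, v}} \<subseteq> G"
    by (auto simp: G_def edges_within_def)
  have "edges_within (T - {{u, v}}) X = edges_within T X - {{u, v}}"
    by (auto simp: edges_within_def)
  with assms(3) True have "w \<in> X" and wu: "reach (edges_within T X - {{u, v}}) w u"
    by auto
  then have "reach G v w"
    using True by (intro reach_edge) (auto simp: G_def edges_within_def)
  also have "reach G w u"
    using reach_mono[OF sub wu] .
  finally have vu: "reach G v u" .
  have to_u: "reach G x u" if "x \<in> X" for x
  proof -
    have "reach (edges_within T X) x u"
      using assms(1) True that by (simp add: induced_connected_iff)
    then have "reach G x u \<or> reach G x v"
      using reach_remove_edge[of "edges_within T X" x u v] reach_mono[OF sub] by blast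
    then show ?thesis
      using rtranclp_trans[OF _ vu] by blast
  qed
  show ?thesis
    unfolding induced_connected_iff G_def[symmetric]
  proof (intro ballI)
    fix a b
    assume "a \<in> X" "b \<in> X"
    show "reach G a b"
      by (rule rtranclp_trans[OF to_u[OF \<open>a \<in> X\<close>] reach_sym[OF to_u[OF \<open>b \<in> X\<close>]]])
  qed
qed

(* Removing the edge {u, v} separates u from v, and w lies on the side of u, so the edge {w, v}
   joins the two sides again without closing a cycle. *)
lemma is_tree_exchange:
  assumes tree: "is_tree V T" and uv: "{u, v} \<in> T" and "w \<in> V" "w \<noteq> v"
    and wu: "reach (T - {{u, v}}) w u"
  shows "is_tree V (insert {w, v} (T - {{u, v}}))"
proof -
  let ?G = "T - {{u, v}}"
  have "forest T"
    using tree by (rule is_tree_forest)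
  have graph: "graph_on V T"
    using tree by (simp add: is_tree_def)
  have "\<not> reach ?G w v"
  proof
    assume "reach ?G w v"
    with wu have "reach ?G u v"
      by (rule rtranclp_trans[OF reach_sym])
    with \<open>forest T\<close> uv show False
      by (simp add: forest_def)
  qed
  with \<open>forest T\<close> have "forest (insert {w, v} ?G)"
    by (blast intro: forest_insert_edge forest_mono)
  moreover have "graph_on V (insert {w, v} ?G)"
  proof -
    have "v \<in> V"
      using graph uv by (auto simp: graph_on_def doubleton_eq_iff)
    with graph \<open>w \<in> V\<close> \<open>w \<noteq> v\<close> show ?thesis
      by (auto simp: graph_on_def)
  qed
  moreover have "edges_within ?G V = ?G"
    using graph by (auto simp: graph_on_def edges_within_def)
  then have "induced_connected (insert {w, v} ?G) V"
    using tree uv \<open>w \<in> V\<close> wu by (intro induced_connected_exchange) (auto simp: is_tree_def)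
  ultimately show ?thesis
    using tree forest_no_cycle by (simp add: is_tree_def)
qed

lemma host_tree_exchange:
  assumes host: "host_tree V E T" and uv: "{u, v} \<in> T" and w: "w \<in> V" "w \<noteq> v" "w \<in> B"
    and wu: "reach (edges_within T B - {{u, v}}) w u"
    and B_least: "\<And>X. X \<in># E \<Longrightarrow> u \<in> X \<Longrightarrow> v \<in> X \<Longrightarrow> B \<subseteq> X"
  shows "host_tree V E (insert {w, v} (T - {{u, v}}))"
proof -
  have "reach (T - {{u, v}}) w u"
    using wu by (rule reach_mono[rotated]) (auto simp: edges_within_def)
  with host uv w have "is_tree V (insert {w, v} (T - {{u, v}}))"
    by (intro is_tree_exchange) (simp_all add: host_tree_def)
  moreover have "induced_connected (insert {w, v} (T - {{u, v}})) X" if "X \<in># E" for X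
  proof (rule induced_connected_exchange[OF _ uv])
    show "induced_connected T X"
      using host that by (simp add: host_tree_def)
    assume "u \<in> X" "v \<in> X"
    with that have "B \<subseteq> X"
      by (rule B_least)
    then have "edges_within T B - {{u, v}} \<subseteq> edges_within (T - {{u, v}}) X"
      by (auto simp: edges_within_def)
    with \<open>B \<subseteq> X\<close> w(3) wu show "w \<in> X \<and> reach (edges_within (T - {{u, v}}) X) w u"
      by (auto intro: reach_mono)
  qed
  ultimately show ?thesis
    by (simp add: host_tree_def)
qed

lemma card_edges_within_exchange:
  assumes "finite S" "{u, v} \<in> T" "u \<in> S" "v \<in> S" "w \<notin> S"
  shows "card (edges_within (insert {w, v} (T - {{u, v}})) S) < card (edges_within T S)"
proof (rule psubset_card_mono)
  show "finite (edges_within T S)"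
    using assms(1) by (auto simp: edges_within_def intro: finite_subset[of _ "Pow S"])
  show "edges_within (insert {w, v} (T - {{u, v}})) S \<subset> edges_within T S"
    using assms(2-5) by (auto simp: edges_within_def)
qed

section \<open>Invariance and reversibility of the operations\<close>

definition common_subtrees :: "'a set \<Rightarrow> 'a set multiset \<Rightarrow> 'a set set" where
  "common_subtrees V E =
     {S. S \<noteq> {} \<and> S \<subseteq> V \<and> (\<forall>T. host_tree V E T \<longrightarrow> induced_connected T S)}"

lemma host_tree_add_common_subtree:
  "e \<in> common_subtrees V E \<Longrightarrow> host_tree V (add_mset e E) T \<longleftrightarrow> host_tree V E T"
  by (auto simp: common_subtrees_def host_tree_def)

lemma hypergraph_add_common_subtree:
  "e \<in> common_subtrees V E \<Longrightarrow> hypergraph V (add_mset e E) \<longleftrightarrow> hypergraph V E"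
  by (auto simp: common_subtrees_def hypergraph_def)

lemma host_tree_forest: "host_tree V E T \<Longrightarrow> forest T"
  by (auto simp: host_tree_def intro: is_tree_forest)

lemma common_subtrees_edge: "hypergraph V E \<Longrightarrow> e \<in># E \<Longrightarrow> e \<in> common_subtrees V E"
  by (auto simp: common_subtrees_def hypergraph_def host_tree_def)

lemma common_subtrees_singleton: "x \<in> V \<Longrightarrow> {x} \<in> common_subtrees V E"
  by (simp add: common_subtrees_def induced_connected_singleton)

lemma common_subtrees_vertex_set: "V \<noteq> {} \<Longrightarrow> V \<in> common_subtrees V E"
  by (simp add: common_subtrees_def host_tree_def is_tree_def)

lemma common_subtrees_Inter:
  assumes "finite FF" "FF \<noteq> {}" "FF \<subseteq> common_subtrees V E" "\<Inter>FF \<noteq> {}"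
  shows "\<Inter>FF \<in> common_subtrees V E"
proof -
  from assms(2) obtain A where "A \<in> FF"
    by blast
  with assms(3) have "\<Inter>FF \<subseteq> V"
    by (auto simp: common_subtrees_def)
  moreover have "induced_connected T (\<Inter>FF)" if "host_tree V E T" for T
    using assms(1-3) that
    by (intro induced_connected_Inter host_tree_forest) (auto simp: common_subtrees_def)
  ultimately show ?thesis
    using assms(4) by (simp add: common_subtrees_def)
qed

lemma common_subtrees_Int:
  "A \<in> common_subtrees V E \<Longrightarrow> B \<in> common_subtrees V E \<Longrightarrow> A \<inter> B \<noteq> {} \<Longrightarrow>
    A \<inter> B \<in> common_subtrees V E"
  using common_subtrees_Inter[of "{A, B}" V E] by simp

lemma common_subtrees_connected_union:
  assumes "F \<noteq> {#}" "set_mset F \<subseteq> common_subtrees V E" "connected_union F"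
  shows "\<Union>(set_mset F) \<in> common_subtrees V E"
  using assms
  by (fastforce simp: common_subtrees_def intro!: induced_connected_connected_union)

lemma common_subtrees_Un:
  "A \<in> common_subtrees V E \<Longrightarrow> B \<in> common_subtrees V E \<Longrightarrow> A \<inter> B \<noteq> {} \<Longrightarrow>
    A \<union> B \<in> common_subtrees V E"
  using common_subtrees_connected_union[OF _ _ connected_union_pair, of A B V E] by simp

lemma hyper_op_cases [consumes 2]:
  assumes "hypergraph V E" and "hyper_op V E E'"
  obtains (add) e where "e \<in> common_subtrees V E" "E' = add_mset e E"
    | (remove) e where "e \<in> common_subtrees V E'" "E = add_mset e E'"
proof -
  have edges: "set_mset M \<subseteq> common_subtrees V M" if "M \<subseteq># E" for M
  proof -
    have "hypergraph V M"
      using assms(1) that by (auto simp: hypergraph_def dest: mset_subset_eqD)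
    then show ?thesis
      by (auto intro: common_subtrees_edge)
  qed
  have removed: "E = add_mset e (E - {#e#})" "e \<noteq> {} \<and> e \<subseteq> V" if "e \<in># E" for e
    using assms(1) that by (simp_all add: hypergraph_def)
  from assms(2) show thesis
    unfolding hyper_op_def
  proof (elim disjE exE conjE)
    fix e
    assume "e \<subseteq> V" "card e = 1" "E' = add_mset e E"
    then show thesis
      by (auto simp: card_1_singleton_iff intro: add[OF common_subtrees_singleton])
  next
    fix e
    assume "e \<in># E" "card e = 1" "E' = E - {#e#}"
    moreover from this obtain x where "e = {x}" "x \<in> V"
      using removed[of e] by (auto simp: card_1_singleton_iff)
    ultimately show thesis
      using removed[of e] by (intro remove[of e]) (simp_all add: common_subtrees_singleton)
  next
    assume "V \<noteq> {}" "E' = add_mset V E"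
    then show thesis
      by (auto intro: add common_subtrees_vertex_set)
  next
    assume "V \<in># E" "E' = E - {#V#}"
    then show thesis
      using removed[of V] by (auto intro: remove common_subtrees_vertex_set)
  next
    fix e
    assume "e \<in># E" "E' = add_mset e E"
    then show thesis
      using edges[of E] by (auto intro: add)
  next
    fix e
    assume "2 \<le> count E e" "E' = E - {#e#}"
    then have "e \<in># E'"
      by (simp add: in_diff_count)
    moreover from this \<open>E' = E - {#e#}\<close> have "e \<in># E"
      by (auto dest: in_diffD)
    ultimately show thesis
      using edges[of E'] removed(1)[of e] \<open>E' = E - {#e#}\<close> by (intro remove[of e]) auto
  next
    fix F
    assume "F \<subseteq># E" "F \<noteq> {#}" "\<Inter>(set_mset F) \<noteq> {}" "E' = add_mset (\<Inter>(set_mset F)) E"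
    then show thesis
      using edges[of E] set_mset_mono[of F E] by (auto intro!: add common_subtrees_Inter)
  next
    fix e1 e2
    assume "{#e1, e2#} \<subseteq># E" "e1 \<inter> e2 \<noteq> {}" "E' = add_mset (e1 \<union> e2) E"
    then show thesis
      using edges[of E] set_mset_mono[of "{#e1, e2#}" E]
      by (intro add[of "e1 \<union> e2"] common_subtrees_Un) auto
  next
    fix F
    assume "F \<subseteq># E" "F \<noteq> {#}" "connected_union F" "E' = add_mset (\<Union>(set_mset F)) E"
    then show thesis
      using edges[of E] set_mset_mono[of F E] by (auto intro!: add common_subtrees_connected_union)
  next
    fix e F
    assume "e \<in># E" "F \<subseteq># E - {#e#}" "F \<noteq> {#}" "e = \<Inter>(set_mset F)" "E' = E - {#e#}"
    moreover from this have "set_mset F \<subseteq> common_subtrees V E'"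
      using edges[of E'] set_mset_mono[of F E'] by auto
    ultimately show thesis
      using removed[of e] by (intro remove[of e]) (simp_all add: common_subtrees_Inter)
  next
    fix e F
    assume "e \<in># E" "F \<subseteq># E - {#e#}" "F \<noteq> {#}" "connected_union F"
      "e = \<Union>(set_mset F)" "E' = E - {#e#}"
    moreover from this have "set_mset F \<subseteq> common_subtrees V E'"
      using edges[of E'] set_mset_mono[of F E'] by auto
    ultimately show thesis
      using removed[of e] by (intro remove[of e]) (simp_all add: common_subtrees_connected_union)
  qed
qed

lemma hyper_op_rtranclp_preserves:
  assumes "(hyper_op V)\<^sup>*\<^sup>* E E'" and "hypergraph V E"
  shows "hypergraph V E' \<and> equivalent V E E'"
  using assms
proof (induction rule: rtranclp_induct)
  case base
  then show ?case
    by (simp add: equivalent_def)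
next
  case (step E' E'')
  then have "hypergraph V E'"
    by blast
  from this step.hyps(2) have "hypergraph V E'' \<and> equivalent V E' E''"
    by (cases rule: hyper_op_cases)
      (use \<open>hypergraph V E'\<close> in
        \<open>auto simp: equivalent_def host_tree_add_common_subtree hypergraph_add_common_subtree\<close>)
  with step.IH step.prems show ?case
    by (simp add: equivalent_def)
qed

lemma hyper_op_add_singleton: "e \<subseteq> V \<Longrightarrow> card e = 1 \<Longrightarrow> hyper_op V E (add_mset e E)"
  unfolding hyper_op_def by (iprover intro: refl)

lemma hyper_op_remove_singleton: "e \<in># E \<Longrightarrow> card e = 1 \<Longrightarrow> hyper_op V E (E - {#e#})"
  unfolding hyper_op_def by (iprover intro: refl)

lemma hyper_op_add_vertex_set: "V \<noteq> {} \<Longrightarrow> hyper_op V E (add_mset V E)"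
  unfolding hyper_op_def by (iprover intro: refl)

lemma hyper_op_remove_vertex_set: "V \<in># E \<Longrightarrow> hyper_op V E (E - {#V#})"
  unfolding hyper_op_def by (iprover intro: refl)

lemma hyper_op_add_copy: "e \<in># E \<Longrightarrow> hyper_op V E (add_mset e E)"
  unfolding hyper_op_def by (iprover intro: refl)

lemma hyper_op_remove_copy: "2 \<le> count E e \<Longrightarrow> hyper_op V E (E - {#e#})"
  unfolding hyper_op_def by (iprover intro: refl)

lemma hyper_op_add_Inter:
  "F \<subseteq># E \<Longrightarrow> F \<noteq> {#} \<Longrightarrow> \<Inter>(set_mset F) \<noteq> {} \<Longrightarrow>
    hyper_op V E (add_mset (\<Inter>(set_mset F)) E)"
  unfolding hyper_op_def by (iprover intro: refl)

lemma hyper_op_add_Un: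
  "{#e1, e2#} \<subseteq># E \<Longrightarrow> e1 \<inter> e2 \<noteq> {} \<Longrightarrow> hyper_op V E (add_mset (e1 \<union> e2) E)"
  unfolding hyper_op_def by (iprover intro: refl)

lemma hyper_op_add_connected_union:
  "F \<subseteq># E \<Longrightarrow> F \<noteq> {#} \<Longrightarrow> connected_union F \<Longrightarrow>
    hyper_op V E (add_mset (\<Union>(set_mset F)) E)"
  unfolding hyper_op_def by (iprover intro: refl)

lemma hyper_op_remove_Inter:
  "e \<in># E \<Longrightarrow> F \<subseteq># E - {#e#} \<Longrightarrow> F \<noteq> {#} \<Longrightarrow> e = \<Inter>(set_mset F) \<Longrightarrow>
    hyper_op V E (E - {#e#})"
  unfolding hyper_op_def by (iprover intro: refl)

lemma hyper_op_remove_connected_union: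
  "e \<in># E \<Longrightarrow> F \<subseteq># E - {#e#} \<Longrightarrow> F \<noteq> {#} \<Longrightarrow> connected_union F \<Longrightarrow>
    e = \<Union>(set_mset F) \<Longrightarrow> hyper_op V E (E - {#e#})"
  unfolding hyper_op_def by (iprover intro: refl)

lemma hyper_op_sym:
  assumes "hypergraph V E" and "hyper_op V E E'"
  shows "hyper_op V E' E"
  using assms(2) unfolding hyper_op_def[of V E E']
proof (elim disjE exE conjE)
  fix e
  assume "e \<subseteq> V" "card e = 1" "E' = add_mset e E"
  then show ?thesis
    using hyper_op_remove_singleton[of e E' V] by simp
next
  fix e
  assume "e \<in># E" "card e = 1" "E' = E - {#e#}"
  moreover from this have "e \<subseteq> V"
    using assms(1) by (simp add: hypergraph_def)
  ultimately show ?thesis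
    using hyper_op_add_singleton[of e V E'] by simp
next
  assume "V \<noteq> {}" "E' = add_mset V E"
  then show ?thesis
    using hyper_op_remove_vertex_set[of V E'] by simp
next
  assume "V \<in># E" "E' = E - {#V#}"
  moreover from this have "V \<noteq> {}"
    using assms(1) by (auto simp: hypergraph_def)
  ultimately show ?thesis
    using hyper_op_add_vertex_set[of V E'] by simp
next
  fix e
  assume "e \<in># E" "E' = add_mset e E"
  then show ?thesis
    using hyper_op_remove_copy[of E' e V] by (simp add: Suc_le_eq)
next
  fix e
  assume "2 \<le> count E e" "E' = E - {#e#}"
  moreover from this have "e \<in># E'"
    by (simp add: in_diff_count)
  ultimately show ?thesis
    using hyper_op_add_copy[of e E' V] by (auto dest: in_diffD)
next
  fix F
  assume "F \<subseteq># E" "F \<noteq> {#}" "E' = add_mset (\<Inter>(set_mset F)) E"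
  then show ?thesis
    using hyper_op_remove_Inter[of "\<Inter>(set_mset F)" E' F V] by simp
next
  fix e1 e2
  assume a: "{#e1, e2#} \<subseteq># E" "e1 \<inter> e2 \<noteq> {}" "E' = add_mset (e1 \<union> e2) E"
  have "hyper_op V E' (E' - {#e1 \<union> e2#})"
  proof (rule hyper_op_remove_connected_union)
    show "connected_union {#e1, e2#}"
      using a(2) by (rule connected_union_pair)
  qed (use a(1,3) in simp_all)
  with a(3) show ?thesis
    by simp
next
  fix F
  assume "F \<subseteq># E" "F \<noteq> {#}" "connected_union F" "E' = add_mset (\<Union>(set_mset F)) E"
  then show ?thesis
    using hyper_op_remove_connected_union[of "\<Union>(set_mset F)" E' F V] by simp
next
  fix e F
  assume "e \<in># E" "F \<subseteq># E - {#e#}" "F \<noteq> {#}" "e = \<Inter>(set_mset F)" "E' = E - {#e#}"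
  moreover from this have "e \<noteq> {}"
    using assms(1) by (simp add: hypergraph_def)
  ultimately show ?thesis
    using hyper_op_add_Inter[of F E' V] by simp
next
  fix e F
  assume "e \<in># E" "F \<subseteq># E - {#e#}" "F \<noteq> {#}" "connected_union F"
    "e = \<Union>(set_mset F)" "E' = E - {#e#}"
  then show ?thesis
    using hyper_op_add_connected_union[of F E' V] by simp
qed

lemma hyper_op_rtranclp_sym:
  assumes "(hyper_op V)\<^sup>*\<^sup>* E E'" and "hypergraph V E"
  shows "(hyper_op V)\<^sup>*\<^sup>* E' E"
  using assms
proof (induction rule: rtranclp_induct)
  case (step E' E'')
  have "hypergraph V E'"
    using hyper_op_rtranclp_preserves[OF step.hyps(1) step.prems] by blast
  then have "hyper_op V E'' E'"
    using step.hyps(2) by (rule hyper_op_sym)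
  then show ?case
    using step.IH[OF step.prems] by (rule converse_rtranclp_into_rtranclp)
qed simp

lemma hyper_op_remove_duplicates: "(hyper_op V)\<^sup>*\<^sup>* M (mset_set (set_mset M))"
proof (induction "size M" arbitrary: M rule: less_induct)
  case less
  show ?case
  proof (cases "\<exists>e. 2 \<le> count M e")
    case True
    then obtain e where e: "2 \<le> count M e"
      by blast
    then have "e \<in># M - {#e#}"
      by (simp add: in_diff_count)
    then have "e \<in># M"
      by (rule in_diffD)
    then have size: "size (M - {#e#}) < size M"
      by (rule size_Diff1_less)
    have "set_mset (add_mset e (M - {#e#})) = set_mset M"
      using \<open>e \<in># M\<close> by (simp only: insert_DiffM)
    with \<open>e \<in># M - {#e#}\<close> have same_set: "set_mset (M - {#e#}) = set_mset M"
      by auto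
    show ?thesis
      using hyper_op_remove_copy[OF e] less(1)[OF size, unfolded same_set]
      by (rule converse_rtranclp_into_rtranclp)
  next
    case False
    have "mset_set (set_mset M) = M"
    proof (rule multiset_eqI)
      fix x
      show "count (mset_set (set_mset M)) x = count M x"
      proof (cases "x \<in># M")
        case True
        then have "0 < count M x"
          by simp
        moreover have "count M x < 2"
          using False by (simp add: not_le)
        ultimately have "count M x = 1"
          by linarith
        with True show ?thesis
          by simp
      next
        case False
        then show ?thesis
          by (simp add: count_eq_zero_iff)
      qed
    qed
    then show ?thesis
      by simp
  qed
qed

section \<open>Derivable sets\<close>

inductive derivable :: "'a set \<Rightarrow> 'a set multiset \<Rightarrow> 'a set \<Rightarrow> bool" for V E where
  edge: "e \<in># E \<Longrightarrow> derivable V E e"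
| singleton: "x \<in> V \<Longrightarrow> derivable V E {x}"
| vertex_set: "V \<noteq> {} \<Longrightarrow> derivable V E V"
| inter: "derivable V E A \<Longrightarrow> derivable V E B \<Longrightarrow> A \<inter> B \<noteq> {} \<Longrightarrow> derivable V E (A \<inter> B)"
| union: "derivable V E A \<Longrightarrow> derivable V E B \<Longrightarrow> A \<inter> B \<noteq> {} \<Longrightarrow> derivable V E (A \<union> B)"

lemma derivable_in_common_subtrees:
  assumes "hypergraph V E" and "derivable V E S"
  shows "S \<in> common_subtrees V E"
  using assms(2)
  by (induction rule: derivable.induct)
    (auto intro: common_subtrees_edge[OF assms(1)] common_subtrees_singleton
      common_subtrees_vertex_set common_subtrees_Int common_subtrees_Un)

lemma derivable_Inter:
  assumes "finite FF" "FF \<noteq> {}" "\<forall>Y\<in>FF. derivable V E Y" "\<Inter>FF \<noteq> {}"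
  shows "derivable V E (\<Inter>FF)"
  using assms
proof (induction FF rule: finite_ne_induct)
  case (insert Y FF)
  then show ?case
    by (auto intro: derivable.inter)
qed simp

lemma derivable_set_joining:
  assumes "induced_connected T S" "x \<in> S" "y \<in> S" "S \<subseteq> V"
    and covered: "\<And>u v. {u, v} \<in> T \<Longrightarrow> u \<in> S \<Longrightarrow> v \<in> S \<Longrightarrow>
      \<exists>Y. derivable V E Y \<and> u \<in> Y \<and> v \<in> Y \<and> Y \<subseteq> S"
  shows "\<exists>Y. derivable V E Y \<and> x \<in> Y \<and> y \<in> Y \<and> Y \<subseteq> S"
proof -
  have "reach (edges_within T S) x y"
    using assms(1-3) by (simp add: induced_connected_iff)
  then show ?thesis
  proof (induction rule: rtranclp_induct)
    case base
    then show ?case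
      using assms(2,4) by (blast intro: derivable.singleton)
  next
    case (step y z)
    then obtain Y where Y: "derivable V E Y" "x \<in> Y" "y \<in> Y" "Y \<subseteq> S"
      by blast
    from step.hyps(2) have "{y, z} \<in> T" "y \<in> S" "z \<in> S"
      by (auto simp: adjacent_def edges_within_def)
    then obtain Y' where Y': "derivable V E Y'" "y \<in> Y'" "z \<in> Y'" "Y' \<subseteq> S"
      using covered by blast
    have "derivable V E (Y \<union> Y')"
      using Y Y' by (blast intro: derivable.union)
    with Y Y' show ?case
      by blast
  qed
qed

lemma derivable_if_edges_covered:
  assumes "induced_connected T S" "finite S" "S \<noteq> {}" "S \<subseteq> V"
    and covered: "\<And>u v. {u, v} \<in> T \<Longrightarrow> u \<in> S \<Longrightarrow> v \<in> S \<Longrightarrow>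
      \<exists>Y. derivable V E Y \<and> u \<in> Y \<and> v \<in> Y \<and> Y \<subseteq> S"
  shows "derivable V E S"
proof -
  obtain x where "x \<in> S"
    using assms(3) by blast
  have "\<exists>Y. derivable V E Y \<and> x \<in> Y \<and> A \<subseteq> Y \<and> Y \<subseteq> S" if "finite A" "A \<subseteq> S" for A
    using that
  proof (induction A rule: finite_induct)
    case empty
    then show ?case
      using derivable_set_joining[OF assms(1) \<open>x \<in> S\<close> \<open>x \<in> S\<close> assms(4) covered] by blast
  next
    case (insert a A)
    then obtain Y where Y: "derivable V E Y" "x \<in> Y" "A \<subseteq> Y" "Y \<subseteq> S"
      by blast
    obtain Y' where Y': "derivable V E Y'" "x \<in> Y'" "a \<in> Y'" "Y' \<subseteq> S"
      using derivable_set_joining[OF assms(1) \<open>x \<in> S\<close> _ assms(4) covered] insert.prems by blast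
    have "derivable V E (Y \<union> Y')"
      using Y Y' by (blast intro: derivable.union)
    with Y Y' show ?case
      by blast
  qed
  then obtain Y where "derivable V E Y" "S \<subseteq> Y" "Y \<subseteq> S"
    using assms(2) by blast
  then show ?thesis
    by (metis subset_antisym)
qed

lemma least_derivable_containing:
  assumes "hypergraph V E" "u \<in> V" "v \<in> V"
  obtains B where "derivable V E B" "u \<in> B" "v \<in> B"
    "\<And>Y. derivable V E Y \<Longrightarrow> u \<in> Y \<Longrightarrow> v \<in> Y \<Longrightarrow> B \<subseteq> Y"
proof -
  define FF where "FF = {Y. derivable V E Y \<and> u \<in> Y \<and> v \<in> Y}"
  have "FF \<subseteq> Pow V"
    using derivable_in_common_subtrees[OF assms(1)] by (auto simp: FF_def common_subtrees_def)
  moreover have "finite V"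
    using assms(1) by (simp add: hypergraph_def)
  ultimately have "finite FF"
    by (simp add: finite_subset)
  moreover have "V \<in> FF"
    using assms(2,3) by (auto simp: FF_def intro: derivable.vertex_set)
  moreover have "u \<in> \<Inter>FF" "v \<in> \<Inter>FF"
    by (auto simp: FF_def)
  ultimately have "derivable V E (\<Inter>FF)"
    by (auto intro: derivable_Inter simp: FF_def)
  with \<open>u \<in> \<Inter>FF\<close> \<open>v \<in> \<Inter>FF\<close> show thesis
    by (intro that[of "\<Inter>FF"]) (auto simp: FF_def)
qed

lemma host_tree_with_fewer_edges_within:
  assumes hg: "hypergraph V E" and host: "host_tree V E T"
    and S: "induced_connected T S" "S \<noteq> {}" "S \<subseteq> V"
    and not_derivable: "\<not> derivable V E S"
  shows "\<exists>T'. host_tree V E T' \<and> card (edges_within T' S) < card (edges_within T S)"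
proof -
  have "finite S"
    using hg S(3) by (auto simp: hypergraph_def intro: finite_subset)
  obtain u v where uv: "{u, v} \<in> T" "u \<in> S" "v \<in> S"
    and uncovered: "\<And>Y. derivable V E Y \<Longrightarrow> u \<in> Y \<Longrightarrow> v \<in> Y \<Longrightarrow> \<not> Y \<subseteq> S"
    using derivable_if_edges_covered[OF S(1) \<open>finite S\<close> S(2,3)] not_derivable by blast
  obtain B where B: "derivable V E B" "u \<in> B" "v \<in> B"
    and B_least: "\<And>Y. derivable V E Y \<Longrightarrow> u \<in> Y \<Longrightarrow> v \<in> Y \<Longrightarrow> B \<subseteq> Y"
    using least_derivable_containing[OF hg] uv S(3) by blast
  have "B \<in> common_subtrees V E"
    using derivable_in_common_subtrees[OF hg B(1)] .
  moreover obtain w where "w \<in> B" "w \<notin> S"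
    using uncovered[OF B] by blast
  ultimately have "w \<in> V" and "reach (edges_within T B) w u"
    using host B(2) by (auto simp: common_subtrees_def induced_connected_iff)
  have exchange: "\<exists>T'. host_tree V E T' \<and> card (edges_within T' S) < card (edges_within T S)"
    if pq: "{p, q} = {u, v}" and wp: "reach (edges_within T B - {{p, q}}) w p" for p q
  proof (intro exI conjI)
    have "{p, q} \<in> T" "p \<in> S" "q \<in> S"
      using pq uv by (auto simp: doubleton_eq_iff insert_commute)
    moreover have "B \<subseteq> X" if "X \<in># E" "p \<in> X" "q \<in> X" for X
      using B_least[OF derivable.edge[OF that(1)]] that(2,3) pq by (auto simp: doubleton_eq_iff)
    ultimately show "host_tree V E (insert {w, q} (T - {{p, q}}))"
      using host \<open>w \<in> V\<close> \<open>w \<notin> S\<close> \<open>w \<in> B\<close> wp by (intro host_tree_exchange) auto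
    show "card (edges_within (insert {w, q} (T - {{p, q}})) S) < card (edges_within T S)"
      using \<open>finite S\<close> \<open>{p, q} \<in> T\<close> \<open>p \<in> S\<close> \<open>q \<in> S\<close> \<open>w \<notin> S\<close>
      by (rule card_edges_within_exchange)
  qed
  from \<open>reach (edges_within T B) w u\<close>
  have "reach (edges_within T B - {{u, v}}) w u \<or> reach (edges_within T B - {{u, v}}) w v"
    by (rule reach_remove_edge)
  then show ?thesis
    using exchange[of u v] exchange[of v u] by (auto simp: insert_commute)
qed

lemma common_subtrees_derivable:
  assumes "hypertree V E" and "S \<in> common_subtrees V E"
  shows "derivable V E S"
proof (rule ccontr)
  assume not_derivable: "\<not> derivable V E S"
  obtain T0 where "host_tree V E T0"
    using assms(1) by (auto simp: hypertree_def)
  then obtain T where T: "host_tree V E T"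
    and min: "\<And>T'. host_tree V E T' \<Longrightarrow> card (edges_within T S) \<le> card (edges_within T' S)"
    using ex_has_least_nat[of "host_tree V E" T0 "\<lambda>T. card (edges_within T S)"] by blast
  have "hypergraph V E"
    using assms(1) by (simp add: hypertree_def)
  moreover have "induced_connected T S" "S \<noteq> {}" "S \<subseteq> V"
    using assms(2) T by (auto simp: common_subtrees_def)
  ultimately obtain T' where "host_tree V E T'" "card (edges_within T' S) < card (edges_within T S)"
    using host_tree_with_fewer_edges_within[OF _ T _ _ _ not_derivable] by blast
  with min show False
    by (simp add: not_le[symmetric])
qed

section \<open>The canonical hypergraph\<close>

(* For A = B the multiset {#A, B#} need not be contained in M; then copying A does the job. *)
lemma hyper_op_add_Int_of_members:
  assumes "A \<in># M" "B \<in># M" "A \<inter> B \<noteq> {}"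
  shows "hyper_op V M (add_mset (A \<inter> B) M)"
proof (cases "A = B")
  case True
  with assms(1) show ?thesis
    by (simp add: hyper_op_add_copy)
next
  case False
  with assms have "{#A, B#} \<subseteq># M"
    by (simp add: insert_subset_eq_iff in_diff_count)
  with assms(3) show ?thesis
    using hyper_op_add_Inter[of "{#A, B#}" M V] by simp
qed

lemma hyper_op_add_Un_of_members:
  assumes "A \<in># M" "B \<in># M" "A \<inter> B \<noteq> {}"
  shows "hyper_op V M (add_mset (A \<union> B) M)"
proof (cases "A = B")
  case True
  with assms(1) show ?thesis
    by (simp add: hyper_op_add_copy)
next
  case False
  with assms have "{#A, B#} \<subseteq># M"
    by (simp add: insert_subset_eq_iff in_diff_count)
  then show ?thesis
    using assms(3) by (rule hyper_op_add_Un)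
qed

lemma hyper_op_adds_derivable:
  assumes "derivable V E S" and "E \<subseteq># M"
  shows "\<exists>M'. (hyper_op V)\<^sup>*\<^sup>* M M' \<and> M \<subseteq># M' \<and> S \<in># M'"
proof -
  have extend: "\<exists>M'. (hyper_op V)\<^sup>*\<^sup>* M M' \<and> M \<subseteq># M' \<and> C \<in># M'"
    if "(hyper_op V)\<^sup>*\<^sup>* M M2" "M \<subseteq># M2" "hyper_op V M2 (add_mset C M2)" for M M2 C
  proof (intro exI conjI)
    show "(hyper_op V)\<^sup>*\<^sup>* M (add_mset C M2)"
      using that(1,3) by (rule rtranclp.rtrancl_into_rtrancl)
    show "M \<subseteq># add_mset C M2"
      using that(2) by (simp add: subset_mset.order_trans)
  qed simp
  have both: "\<exists>M2. (hyper_op V)\<^sup>*\<^sup>* M M2 \<and> M \<subseteq># M2 \<and> A \<in># M2 \<and> B \<in># M2"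
    if IH_A: "\<And>M. E \<subseteq># M \<Longrightarrow> \<exists>M'. (hyper_op V)\<^sup>*\<^sup>* M M' \<and> M \<subseteq># M' \<and> A \<in># M'"
      and IH_B: "\<And>M. E \<subseteq># M \<Longrightarrow> \<exists>M'. (hyper_op V)\<^sup>*\<^sup>* M M' \<and> M \<subseteq># M' \<and> B \<in># M'"
      and "E \<subseteq># M" for A B M
  proof -
    obtain M1 where M1: "(hyper_op V)\<^sup>*\<^sup>* M M1" "M \<subseteq># M1" "A \<in># M1"
      using IH_A \<open>E \<subseteq># M\<close> by blast
    moreover obtain M2 where M2: "(hyper_op V)\<^sup>*\<^sup>* M1 M2" "M1 \<subseteq># M2" "B \<in># M2"
      using IH_B subset_mset.order_trans[OF \<open>E \<subseteq># M\<close> M1(2)] by blast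
    ultimately show ?thesis
      by (intro exI[of _ M2])
        (auto simp: rtranclp_trans[OF M1(1) M2(1)] subset_mset.order_trans[OF M1(2) M2(2)]
          dest: mset_subset_eqD)
  qed
  from assms show ?thesis
  proof (induction arbitrary: M rule: derivable.induct)
    case (edge e)
    then show ?case
      by (auto dest: mset_subset_eqD)
  next
    case (singleton x)
    then show ?case
      by (intro extend[of M M]) (auto intro: hyper_op_add_singleton)
  next
    case vertex_set
    then show ?case
      by (intro extend[of M M]) (auto intro: hyper_op_add_vertex_set)
  next
    case (inter A B)
    then obtain M2 where "(hyper_op V)\<^sup>*\<^sup>* M M2" "M \<subseteq># M2" "A \<in># M2" "B \<in># M2"
      using both[OF inter.IH] by blast
    with inter.hyps(3) show ?case
      by (intro extend[of M M2] hyper_op_add_Int_of_members)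
  next
    case (union A B)
    then obtain M2 where "(hyper_op V)\<^sup>*\<^sup>* M M2" "M \<subseteq># M2" "A \<in># M2" "B \<in># M2"
      using both[OF union.IH] by blast
    with union.hyps(3) show ?case
      by (intro extend[of M M2] hyper_op_add_Un_of_members)
  qed
qed

lemma hyper_op_adds_derivables:
  assumes "finite A" and "\<forall>S\<in>A. derivable V E S"
  shows "\<exists>M. (hyper_op V)\<^sup>*\<^sup>* E M \<and> E \<subseteq># M \<and> A \<subseteq> set_mset M"
  using assms
proof (induction A rule: finite_induct)
  case (insert S A)
  then obtain M where M: "(hyper_op V)\<^sup>*\<^sup>* E M" "E \<subseteq># M" "A \<subseteq> set_mset M"
    by auto
  moreover obtain M' where M': "(hyper_op V)\<^sup>*\<^sup>* M M'" "M \<subseteq># M'" "S \<in># M'"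
    using hyper_op_adds_derivable[of V E S M] insert.prems M(2) by auto
  moreover have "set_mset M \<subseteq> set_mset M'"
    using M'(2) by (rule set_mset_mono)
  ultimately show ?case
    by (intro exI[of _ M'])
      (auto simp: rtranclp_trans[OF M(1) M'(1)] subset_mset.order_trans[OF M(2) M'(2)])
qed auto

lemma hyper_op_to_common_subtrees:
  assumes "hypertree V E"
  shows "(hyper_op V)\<^sup>*\<^sup>* E (mset_set (common_subtrees V E))"
proof -
  have hg: "hypergraph V E"
    using assms by (simp add: hypertree_def)
  have "common_subtrees V E \<subseteq> Pow V"
    by (auto simp: common_subtrees_def)
  with hg have "finite (common_subtrees V E)"
    by (auto simp: hypergraph_def intro: finite_subset)
  moreover have "\<forall>S\<in>common_subtrees V E. derivable V E S"
    using common_subtrees_derivable[OF assms] by blast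
  ultimately obtain M where M: "(hyper_op V)\<^sup>*\<^sup>* E M" "common_subtrees V E \<subseteq> set_mset M"
    using hyper_op_adds_derivables by blast
  have "hypergraph V M" "equivalent V E M"
    using hyper_op_rtranclp_preserves[OF M(1) hg] by auto
  then have "set_mset M \<subseteq> common_subtrees V E"
    by (auto simp: common_subtrees_def hypergraph_def equivalent_def host_tree_def)
  with M(2) have "set_mset M = common_subtrees V E"
    by blast
  with rtranclp_trans[OF M(1) hyper_op_remove_duplicates[of V M]] show ?thesis
    by simp
qed

theorem mainTheorem7:
  fixes V :: "'a set" and E E' :: "'a set multiset"
  assumes "hypertree V E" and "hypertree V E'"
  shows "equivalent V E E' \<longleftrightarrow> (hyper_op V)\<^sup>*\<^sup>* E E'"
proof
  assume "equivalent V E E'"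
  then have "common_subtrees V E = common_subtrees V E'"
    by (simp add: equivalent_def common_subtrees_def)
  with hyper_op_to_common_subtrees[OF assms(1)]
  have "(hyper_op V)\<^sup>*\<^sup>* E (mset_set (common_subtrees V E'))"
    by simp
  moreover have "(hyper_op V)\<^sup>*\<^sup>* (mset_set (common_subtrees V E')) E'"
    using hyper_op_rtranclp_sym[OF hyper_op_to_common_subtrees[OF assms(2)]] assms(2)
    by (simp add: hypertree_def)
  ultimately show "(hyper_op V)\<^sup>*\<^sup>* E E'"
    by (rule rtranclp_trans)
next
  assume "(hyper_op V)\<^sup>*\<^sup>* E E'"
  with assms(1) show "equivalent V E E'"
    using hyper_op_rtranclp_preserves by (auto simp: hypertree_def)
qed

end
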